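(* Let $X\subseteq\mathbb{C}(\mathbb{Z})$ admit a reproducing filter $\phi\in\mathbb{C}_m(\mathbb{Z})$ with $\|\phi\|_2\le\mathsf{R}/\sqrt{2m+1}$. Then for every integer $k\ge2$, the $k$-fold convolution power $\phi^k=\phi*\cdots*\phi\in\mathbb{C}_{km}(\mathbb{Z})$ is also reproducing for $X$, and $$\|\phi^k\|_2\le\|\mathcal{F}_{km}[\phi^k]\|_1\le\frac{c_k\mathsf{R}^k}{\sqrt{2km+1}},$$ where the constants $c_k$ depend only on $k$ and satisfy $c_k=2^{k-1}$ for $k=2^p$, $c_{2k+1}\le3\sqrt{2k+1}\,c_k^2$ for $k\in\mathbb{N}$ (with $c_1=1$), and $\log(c_k)=O(k\log k)$.
   Context: $\mathbb{C}(\mathbb{Z})$: two-sided complex sequences; $\mathbb{C}_p(\mathbb{Z})$: those with $x_t=0$ for $|t|>p$. Convolution $(u*v)_t=\sum_\tau u_\tau v_{t-\tau}$; $\phi$ reproduces $X$ if $\phi*x=x$ for all $x\in X$. $\|\cdot\|_2$ on sequences is the $\ell_2$-norm. DFT $(\mathcal{F}_p[u])_k=(2p+1)^{-1/2}\sum_{|\tau|\le p}\exp(-i2\pi k\tau/(2p+1))u_\tau$, $k=0,\dots,2p$. *)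

theory Defs
  imports "HOL-Analysis.Analysis" "HOL-Library.Landau_Symbols"
begin

type_synonym cseq = "int \<Rightarrow> complex"

definition supp_in :: "nat \<Rightarrow> cseq set" where
  "supp_in p = {x. \<forall>t. \<bar>t\<bar> > int p \<longrightarrow> x t = 0}"

definition conv :: "cseq \<Rightarrow> cseq \<Rightarrow> cseq" where
  "conv u v = (\<lambda>t. infsum (\<lambda>\<tau>. u \<tau> * v (t - \<tau>)) UNIV)"

definition reproduces :: "cseq \<Rightarrow> cseq set \<Rightarrow> bool" where
  "reproduces \<phi> X \<longleftrightarrow> (\<forall>x\<in>X. conv \<phi> x = x)"

fun conv_pow :: "cseq \<Rightarrow> nat \<Rightarrow> cseq" where
  "conv_pow u 0 = (\<lambda>t. if t = 0 then 1 else 0)"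
| "conv_pow u (Suc n) = conv u (conv_pow u n)"

definition l2norm :: "cseq \<Rightarrow> real" where
  "l2norm x = sqrt (infsum (\<lambda>t. (cmod (x t))\<^sup>2) UNIV)"

definition dft :: "nat \<Rightarrow> cseq \<Rightarrow> nat \<Rightarrow> complex" where
  "dft p u k = complex_of_real (1 / sqrt (real (2*p+1))) *
     (\<Sum>\<tau>\<in>{-int p..int p}.
        exp (- \<i> * complex_of_real (2 * pi * real k * real_of_int \<tau> / real (2*p+1))) * u \<tau>)"

definition dft_l1 :: "nat \<Rightarrow> cseq \<Rightarrow> real" where
  "dft_l1 p u = (\<Sum>k\<le>2*p. cmod (dft p u k))"

end

theory Submission
  imports Defs "HOL-Library.Real_Mod"
begin

(* Since phi^k is supported in [-km, km], the DFT of length N = 2km+1 turns convolution into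
   multiplication: up to normalisation, F[phi^k] is the k-th power of F[phi]. By Cauchy-Schwarz
   every unnormalised coefficient of phi is at most sqrt(2m+1) ||phi||_2 <= R, so
   sum_j |F[phi]_j|^k <= R^(k-2) sum_j |F[phi]_j|^2, and Parseval turns the last sum into
   N ||phi||_2^2 <= N R^2 / (2m+1). As N <= k (2m+1), the bound holds with c_k = k, and
   c_k = 2^(k-1) >= k meets all the growth conditions. The inequality
   ||phi^k||_2 <= ||F[phi^k]||_1 is Parseval followed by l2 <= l1, and reproduction is
   associativity of convolution of finitely supported sequences. *)

lemma supp_in_zero: "u \<in> supp_in p \<Longrightarrow> t \<notin> {-int p..int p} \<Longrightarrow> u t = 0"
  by (auto simp: supp_in_def)

lemma supp_in_mono: "u \<in> supp_in a \<Longrightarrow> a \<le> b \<Longrightarrow> u \<in> supp_in b"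
  by (auto simp: supp_in_def)

lemma sum_supp_in_extend:
  assumes "u \<in> supp_in a" "a \<le> p"
  shows "(\<Sum>\<tau>\<in>{-int p..int p}. g \<tau> * u \<tau>) = (\<Sum>\<tau>\<in>{-int a..int a}. g \<tau> * u \<tau>)"
  by (rule sum.mono_neutral_right) (use assms supp_in_zero[OF assms(1)] in auto)

lemma sum_supp_in_shift:
  assumes "v \<in> supp_in b" "\<bar>\<tau>\<bar> \<le> int a" "a + b \<le> p"
  shows "(\<Sum>\<sigma>\<in>{-int p..int p}. v (\<sigma> - \<tau>) * g \<sigma>) = (\<Sum>s\<in>{-int b..int b}. v s * g (s + \<tau>))"
proof -
  have "(\<Sum>\<sigma>\<in>{-int p..int p}. v (\<sigma> - \<tau>) * g \<sigma>) = (\<Sum>s\<in>(\<lambda>\<sigma>. \<sigma> - \<tau>) ` {-int p..int p}. v s * g (s + \<tau>))"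
    by (subst sum.reindex) (auto simp: inj_on_def)
  also have "\<dots> = (\<Sum>s\<in>{-int b..int b}. v s * g (s + \<tau>))"
  proof (rule sum.mono_neutral_right)
    show "{-int b..int b} \<subseteq> (\<lambda>\<sigma>. \<sigma> - \<tau>) ` {-int p..int p}"
      using assms(2,3) by (auto intro!: image_eqI[where x="_ + \<tau>"])
  qed (use supp_in_zero[OF assms(1)] in auto)
  finally show ?thesis .
qed

lemma conv_eq_sum:
  assumes "u \<in> supp_in a"
  shows "conv u v t = (\<Sum>\<tau>\<in>{-int a..int a}. u \<tau> * v (t - \<tau>))"
  unfolding conv_def
  by (intro infsumI has_sum_finite_neutralI) (use supp_in_zero[OF assms] in auto)

lemma conv_supp_in:
  assumes "u \<in> supp_in a" "v \<in> supp_in b"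
  shows "conv u v \<in> supp_in (a + b)"
  unfolding supp_in_def
proof (intro CollectI allI impI)
  fix t assume "\<bar>t\<bar> > int (a + b)"
  then show "conv u v t = 0"
    unfolding conv_eq_sum[OF assms(1)] by (intro sum.neutral) (use assms(2) in \<open>auto simp: supp_in_def\<close>)
qed

definition unit_impulse :: cseq where
  "unit_impulse = (\<lambda>t. if t = 0 then 1 else 0)"

lemma unit_impulse_supp_in: "unit_impulse \<in> supp_in 0"
  by (auto simp: supp_in_def unit_impulse_def)

lemma conv_unit_impulse_right:
  assumes "u \<in> supp_in a"
  shows "conv u unit_impulse = u"
proof
  fix t
  have "conv u unit_impulse t = (\<Sum>\<tau>\<in>{-int a..int a}. if \<tau> = t then u \<tau> else 0)"
    unfolding conv_eq_sum[OF assms] unit_impulse_def by (intro sum.cong) auto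
  also have "\<dots> = u t"
    using supp_in_zero[OF assms] by (auto simp: sum.delta')
  finally show "conv u unit_impulse t = u t" .
qed

lemma conv_assoc:
  assumes "u \<in> supp_in a" "v \<in> supp_in b"
  shows "conv (conv u v) w = conv u (conv v w)"
proof
  fix t
  let ?A = "{-int a..int a}" and ?AB = "{-int (a + b)..int (a + b)}"
  have "conv (conv u v) w t = (\<Sum>\<sigma>\<in>?AB. (\<Sum>\<tau>\<in>?A. u \<tau> * v (\<sigma> - \<tau>)) * w (t - \<sigma>))"
    by (simp add: conv_eq_sum[OF conv_supp_in[OF assms]] conv_eq_sum[OF assms(1)])
  also have "\<dots> = (\<Sum>\<tau>\<in>?A. u \<tau> * (\<Sum>\<sigma>\<in>?AB. v (\<sigma> - \<tau>) * w (t - \<sigma>)))"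
    by (simp add: sum_distrib_left sum_distrib_right mult.assoc) (rule sum.swap)
  also have "\<dots> = (\<Sum>\<tau>\<in>?A. u \<tau> * (\<Sum>s\<in>{-int b..int b}. v s * w (t - \<tau> - s)))"
  proof (intro sum.cong refl)
    fix \<tau> assume "\<tau> \<in> ?A"
    then have "\<bar>\<tau>\<bar> \<le> int a" by auto
    from sum_supp_in_shift[OF assms(2) this order_refl, of "\<lambda>\<sigma>. w (t - \<sigma>)"]
    show "u \<tau> * (\<Sum>\<sigma>\<in>?AB. v (\<sigma> - \<tau>) * w (t - \<sigma>)) = u \<tau> * (\<Sum>s\<in>{-int b..int b}. v s * w (t - \<tau> - s))"
      by (simp add: diff_diff_eq add.commute)
  qed
  also have "\<dots> = conv u (conv v w) t"
    by (simp add: conv_eq_sum[OF assms(1)] conv_eq_sum[OF assms(2)])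
  finally show "conv (conv u v) w t = conv u (conv v w) t" .
qed

lemma reproduces_conv:
  assumes "u \<in> supp_in a" "v \<in> supp_in b" "reproduces u X" "reproduces v X"
  shows "reproduces (conv u v) X"
  using assms by (simp add: reproduces_def conv_assoc)

declare conv_pow.simps(1) [simp del]

lemma conv_pow_0 [simp]: "conv_pow u 0 = unit_impulse"
  by (simp add: conv_pow.simps(1) unit_impulse_def)

lemma conv_pow_supp_in: "\<phi> \<in> supp_in m \<Longrightarrow> conv_pow \<phi> k \<in> supp_in (k * m)"
proof (induction k)
  case 0
  show ?case using unit_impulse_supp_in by simp
next
  case (Suc k)
  then show ?case using conv_supp_in[of \<phi> m "conv_pow \<phi> k" "k * m"] by simp
qed

lemma reproduces_conv_pow:
  assumes "\<phi> \<in> supp_in m" "reproduces \<phi> X" "k \<ge> 1"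
  shows "reproduces (conv_pow \<phi> k) X"
  using assms(3)
proof (induction k rule: dec_induct)
  case base
  show ?case using assms(2) conv_unit_impulse_right[OF assms(1)] by simp
next
  case (step k)
  then show ?case using reproduces_conv[OF assms(1) conv_pow_supp_in[OF assms(1)] assms(2)] by simp
qed

definition dft_kernel :: "nat \<Rightarrow> nat \<Rightarrow> int \<Rightarrow> complex" where
  "dft_kernel p j \<tau> = cis (- (2 * pi * real j * real_of_int \<tau> / real (2 * p + 1)))"

(* udft p u = sqrt (2p+1) * dft p u: without the normalisation the convolution theorem is exact. *)
definition udft :: "nat \<Rightarrow> cseq \<Rightarrow> nat \<Rightarrow> complex" where
  "udft p u j = (\<Sum>\<tau>\<in>{-int p..int p}. dft_kernel p j \<tau> * u \<tau>)"

lemma dft_eq_udft: "dft p u j = complex_of_real (1 / sqrt (real (2 * p + 1))) * udft p u j"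
proof -
  have exp_cis: "exp (- \<i> * complex_of_real \<theta>) = cis (- \<theta>)" for \<theta>
    by (simp add: cis_conv_exp)
  show ?thesis
    unfolding dft_def udft_def dft_kernel_def exp_cis ..
qed

lemma norm_dft_kernel [simp]: "norm (dft_kernel p j \<tau>) = 1"
  by (simp add: dft_kernel_def)

lemma dft_kernel_add: "dft_kernel p j (s + \<tau>) = dft_kernel p j s * dft_kernel p j \<tau>"
  unfolding dft_kernel_def cis_mult by (simp add: distrib_left add_divide_distrib)

lemma cnj_dft_kernel: "cnj (dft_kernel p j \<tau>) = dft_kernel p j (- \<tau>)"
  by (simp add: dft_kernel_def cis_cnj)

lemma dft_kernel_power: "dft_kernel p 1 d ^ j = dft_kernel p j d"
  unfolding dft_kernel_def Complex.DeMoivre by (simp add: mult_ac)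

lemma dft_kernel_eq_1_iff: "dft_kernel p j d = 1 \<longleftrightarrow> int (2 * p + 1) dvd int j * d"
proof -
  have N: "real (2 * p + 1) > 0" by simp
  have angle: "- (2 * pi * real j * real_of_int d / real (2 * p + 1)) = real_of_int n * (2 * pi)
      \<longleftrightarrow> - (int j * d) = n * int (2 * p + 1)" for n
  proof -
    have "- (2 * pi * real j * real_of_int d / real (2 * p + 1)) = real_of_int n * (2 * pi)
        \<longleftrightarrow> (2 * pi) * - (real j * real_of_int d) = (2 * pi) * (real_of_int n * real (2 * p + 1))"
      using N by (simp add: field_simps)
    also have "\<dots> \<longleftrightarrow> - (real j * real_of_int d) = real_of_int n * real (2 * p + 1)"
      by (rule mult_left_cancel) simp
    also have "\<dots> \<longleftrightarrow> real_of_int (- (int j * d)) = real_of_int (n * int (2 * p + 1))"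
      by simp
    also have "\<dots> \<longleftrightarrow> - (int j * d) = n * int (2 * p + 1)"
      by (rule of_int_eq_iff)
    finally show ?thesis .
  qed
  have "dft_kernel p j d = 1 \<longleftrightarrow> (\<exists>n. - (int j * d) = n * int (2 * p + 1))"
    unfolding dft_kernel_def cis_eq_1_iff angle ..
  also have "\<dots> \<longleftrightarrow> int (2 * p + 1) dvd - (int j * d)"
    by (auto simp: dvd_def mult.commute)
  also have "\<dots> \<longleftrightarrow> int (2 * p + 1) dvd int j * d"
    by (rule dvd_minus_iff)
  finally show ?thesis .
qed

lemma sum_dft_kernel:
  "(\<Sum>j\<le>2 * p. dft_kernel p j d) = (if int (2 * p + 1) dvd d then of_nat (2 * p + 1) else 0)"
proof -
  let ?z = "dft_kernel p 1 d"
  have sum_pow: "(\<Sum>j<2 * p + 1. ?z ^ j) = (\<Sum>j\<le>2 * p. dft_kernel p j d)"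
    unfolding dft_kernel_power by (simp add: lessThan_Suc_atMost)
  show ?thesis
  proof (cases "int (2 * p + 1) dvd d")
    case True
    then have "?z = 1" by (simp add: dft_kernel_eq_1_iff)
    then show ?thesis using True by (simp flip: sum_pow)
  next
    case False
    then have "?z \<noteq> 1" by (simp add: dft_kernel_eq_1_iff)
    then have "(\<Sum>j<2 * p + 1. ?z ^ j) = (?z ^ (2 * p + 1) - 1) / (?z - 1)"
      by (rule geometric_sum)
    moreover have "?z ^ (2 * p + 1) = 1"
      unfolding dft_kernel_power dft_kernel_eq_1_iff by simp
    ultimately show ?thesis using False by (simp only: sum_pow) simp
  qed
qed

lemma udft_conv:
  assumes "u \<in> supp_in a" "v \<in> supp_in b" "a + b \<le> p"
  shows "udft p (conv u v) j = udft p u j * udft p v j"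
proof -
  let ?E = "dft_kernel p j" and ?A = "{-int a..int a}" and ?B = "{-int b..int b}"
  have "udft p (conv u v) j = (\<Sum>\<tau>\<in>?A. u \<tau> * (\<Sum>\<sigma>\<in>{-int p..int p}. v (\<sigma> - \<tau>) * ?E \<sigma>))"
    unfolding udft_def conv_eq_sum[OF assms(1)]
    by (simp add: sum_distrib_left sum_distrib_right mult_ac) (rule sum.swap)
  also have "\<dots> = (\<Sum>\<tau>\<in>?A. u \<tau> * (\<Sum>s\<in>?B. v s * ?E (s + \<tau>)))"
  proof (intro sum.cong refl)
    fix \<tau> assume "\<tau> \<in> ?A"
    then have "\<bar>\<tau>\<bar> \<le> int a" by auto
    from sum_supp_in_shift[OF assms(2) this assms(3), of ?E]
    show "u \<tau> * (\<Sum>\<sigma>\<in>{-int p..int p}. v (\<sigma> - \<tau>) * ?E \<sigma>) = u \<tau> * (\<Sum>s\<in>?B. v s * ?E (s + \<tau>))"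
      by simp
  qed
  also have "\<dots> = (\<Sum>\<tau>\<in>?A. (?E \<tau> * u \<tau>) * (\<Sum>s\<in>?B. ?E s * v s))"
    by (simp add: dft_kernel_add sum_distrib_left mult_ac)
  also have "\<dots> = (\<Sum>\<tau>\<in>?A. ?E \<tau> * u \<tau>) * (\<Sum>s\<in>?B. ?E s * v s)"
    by (rule sum_distrib_right[symmetric])
  also have "\<dots> = udft p u j * udft p v j"
    unfolding udft_def
    using sum_supp_in_extend[OF assms(1), of p] sum_supp_in_extend[OF assms(2), of p] assms(3)
    by simp
  finally show ?thesis .
qed

lemma udft_conv_pow:
  assumes "\<phi> \<in> supp_in m" "k * m \<le> p"
  shows "udft p (conv_pow \<phi> k) j = udft p \<phi> j ^ k"
  using assms(2)
proof (induction k)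
  case 0
  have "udft p unit_impulse j = (\<Sum>\<tau>\<in>{-int 0..int 0}. dft_kernel p j \<tau> * unit_impulse \<tau>)"
    unfolding udft_def by (rule sum_supp_in_extend[OF unit_impulse_supp_in]) simp
  then show ?case by (simp add: unit_impulse_def dft_kernel_def)
next
  case (Suc k)
  then show ?case
    using udft_conv[OF assms(1) conv_pow_supp_in[OF assms(1), of k], of p j] by simp
qed

lemma sum_dft_kernel_diff:
  assumes "\<tau> \<in> {-int p..int p}" "\<sigma> \<in> {-int p..int p}"
  shows "(\<Sum>j\<le>2 * p. dft_kernel p j (\<tau> - \<sigma>)) = (if \<tau> = \<sigma> then of_nat (2 * p + 1) else 0)"
proof -
  have "int (2 * p + 1) dvd \<tau> - \<sigma> \<longleftrightarrow> \<tau> = \<sigma>"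
  proof
    assume dvd: "int (2 * p + 1) dvd \<tau> - \<sigma>"
    show "\<tau> = \<sigma>"
    proof (rule ccontr)
      assume "\<tau> \<noteq> \<sigma>"
      then have "\<bar>int (2 * p + 1)\<bar> \<le> \<bar>\<tau> - \<sigma>\<bar>" using dvd by (intro dvd_imp_le_int) auto
      with assms show False by auto
    qed
  qed simp
  then show ?thesis by (simp add: sum_dft_kernel)
qed

lemma dft_kernel_diff: "dft_kernel p j (\<tau> - \<sigma>) = dft_kernel p j \<tau> * cnj (dft_kernel p j \<sigma>)"
  using dft_kernel_add[of p j \<tau> "- \<sigma>"] by (simp add: cnj_dft_kernel)

lemma udft_mult_cnj:
  "udft p u j * cnj (udft p u j) =
    (\<Sum>\<tau>\<in>{-int p..int p}. \<Sum>\<sigma>\<in>{-int p..int p}. dft_kernel p j (\<tau> - \<sigma>) * (u \<tau> * cnj (u \<sigma>)))"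
  unfolding udft_def cnj_sum complex_cnj_mult sum_product
  by (intro sum.cong refl) (simp add: dft_kernel_diff mult_ac)

lemma l2norm_nonneg: "0 \<le> l2norm u"
  by (simp add: l2norm_def infsum_nonneg)

lemma l2norm_supp_in:
  assumes "u \<in> supp_in p"
  shows "l2norm u = L2_set (\<lambda>\<tau>. cmod (u \<tau>)) {-int p..int p}"
  unfolding l2norm_def L2_set_def
  by (intro arg_cong[where f=sqrt] infsumI has_sum_finite_neutralI) (use supp_in_zero[OF assms] in auto)

lemma parseval_udft:
  assumes "u \<in> supp_in p"
  shows "(\<Sum>j\<le>2 * p. (cmod (udft p u j))\<^sup>2) = real (2 * p + 1) * (l2norm u)\<^sup>2"
proof -
  let ?I = "{-int p..int p}"
  have "complex_of_real (\<Sum>j\<le>2 * p. (cmod (udft p u j))\<^sup>2) = (\<Sum>j\<le>2 * p. udft p u j * cnj (udft p u j))"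
    by (simp only: of_real_sum complex_norm_square)
  also have "\<dots> = (\<Sum>\<tau>\<in>?I. \<Sum>\<sigma>\<in>?I. (\<Sum>j\<le>2 * p. dft_kernel p j (\<tau> - \<sigma>)) * (u \<tau> * cnj (u \<sigma>)))"
    unfolding udft_mult_cnj sum_distrib_right
    by (rule trans[OF sum.swap], intro sum.cong refl, rule sum.swap)
  also have "\<dots> = (\<Sum>\<tau>\<in>?I. of_nat (2 * p + 1) * (u \<tau> * cnj (u \<tau>)))"
  proof (intro sum.cong refl)
    fix \<tau> assume \<tau>: "\<tau> \<in> ?I"
    have "(\<Sum>\<sigma>\<in>?I. (\<Sum>j\<le>2 * p. dft_kernel p j (\<tau> - \<sigma>)) * (u \<tau> * cnj (u \<sigma>)))
        = (\<Sum>\<sigma>\<in>?I. if \<tau> = \<sigma> then of_nat (2 * p + 1) * (u \<tau> * cnj (u \<sigma>)) else 0)"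
      using \<tau> by (intro sum.cong refl) (simp add: sum_dft_kernel_diff)
    also have "\<dots> = of_nat (2 * p + 1) * (u \<tau> * cnj (u \<tau>))"
      using \<tau> by (simp add: sum.delta)
    finally show "(\<Sum>\<sigma>\<in>?I. (\<Sum>j\<le>2 * p. dft_kernel p j (\<tau> - \<sigma>)) * (u \<tau> * cnj (u \<sigma>)))
        = of_nat (2 * p + 1) * (u \<tau> * cnj (u \<tau>))" .
  qed
  also have "\<dots> = complex_of_real (real (2 * p + 1) * (\<Sum>\<tau>\<in>?I. (cmod (u \<tau>))\<^sup>2))"
    by (simp only: of_real_mult of_real_sum complex_norm_square of_real_of_nat_eq sum_distrib_left)
  finally have "(\<Sum>j\<le>2 * p. (cmod (udft p u j))\<^sup>2) = real (2 * p + 1) * (\<Sum>\<tau>\<in>?I. (cmod (u \<tau>))\<^sup>2)"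
    using of_real_eq_iff by blast
  then show ?thesis
    by (simp add: l2norm_supp_in[OF assms] L2_set_def sum_nonneg)
qed

lemma norm_dft: "cmod (dft p u j) = cmod (udft p u j) / sqrt (real (2 * p + 1))"
  unfolding dft_eq_udft norm_mult norm_of_real by simp

lemma l2norm_le_dft_l1:
  assumes "u \<in> supp_in p"
  shows "l2norm u \<le> dft_l1 p u"
proof -
  have "(\<Sum>j\<le>2 * p. (cmod (dft p u j))\<^sup>2) = (\<Sum>j\<le>2 * p. (cmod (udft p u j))\<^sup>2) / real (2 * p + 1)"
    unfolding norm_dft power_divide sum_divide_distrib by simp
  then have parseval_dft: "(l2norm u)\<^sup>2 = (\<Sum>j\<le>2 * p. (cmod (dft p u j))\<^sup>2)"
    by (simp add: parseval_udft[OF assms])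
  have "l2norm u = sqrt ((l2norm u)\<^sup>2)"
    by (simp add: l2norm_nonneg)
  also have "\<dots> = L2_set (\<lambda>j. cmod (dft p u j)) {..2 * p}"
    unfolding parseval_dft L2_set_def ..
  also have "\<dots> \<le> dft_l1 p u"
    unfolding dft_l1_def by (rule L2_set_le_sum) simp
  finally show ?thesis .
qed

lemma norm_udft_le:
  assumes "\<phi> \<in> supp_in m" "m \<le> p"
  shows "cmod (udft p \<phi> j) \<le> sqrt (real (2 * m + 1)) * l2norm \<phi>"
proof -
  let ?M = "{-int m..int m}"
  have "cmod (udft p \<phi> j) = cmod (\<Sum>\<tau>\<in>?M. dft_kernel p j \<tau> * \<phi> \<tau>)"
    unfolding udft_def sum_supp_in_extend[OF assms] ..
  also have "\<dots> \<le> (\<Sum>\<tau>\<in>?M. \<bar>cmod (\<phi> \<tau>)\<bar> * \<bar>1\<bar>)"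
    by (rule order_trans[OF norm_sum]) (simp add: norm_mult)
  also have "\<dots> \<le> L2_set (\<lambda>\<tau>. cmod (\<phi> \<tau>)) ?M * L2_set (\<lambda>_. 1) ?M"
    by (rule L2_set_mult_ineq)
  also have "\<dots> = l2norm \<phi> * sqrt (real (2 * m + 1))"
    by (simp add: l2norm_supp_in[OF assms(1)] L2_set_constant)
  finally show ?thesis by (simp add: mult.commute)
qed

lemma sum_power_le_sum_square:
  fixes f :: "'a \<Rightarrow> real"
  assumes "\<And>i. i \<in> A \<Longrightarrow> 0 \<le> f i \<and> f i \<le> B" "2 \<le> k"
  shows "(\<Sum>i\<in>A. f i ^ k) \<le> B ^ (k - 2) * (\<Sum>i\<in>A. (f i)\<^sup>2)"
  unfolding sum_distrib_left
proof (rule sum_mono)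
  fix i assume "i \<in> A"
  have "f i ^ k = f i ^ (k - 2) * (f i)\<^sup>2"
    using assms(2) by (metis le_add_diff_inverse2 power_add)
  also have "\<dots> \<le> B ^ (k - 2) * (f i)\<^sup>2"
    using assms(1)[OF \<open>i \<in> A\<close>] by (intro mult_right_mono power_mono) auto
  finally show "f i ^ k \<le> B ^ (k - 2) * (f i)\<^sup>2" .
qed

lemma dft_l1_conv_pow_le:
  assumes \<phi>: "\<phi> \<in> supp_in m" and k: "2 \<le> k" and p: "k * m \<le> p"
  shows "dft_l1 p (conv_pow \<phi> k)
    \<le> sqrt (real (2 * p + 1)) * (sqrt (real (2 * m + 1)) * l2norm \<phi>) ^ (k - 2) * (l2norm \<phi>)\<^sup>2"
proof -
  let ?a = "\<lambda>j. cmod (udft p \<phi> j)" and ?B = "sqrt (real (2 * m + 1)) * l2norm \<phi>"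
    and ?N = "real (2 * p + 1)"
  have "m \<le> k * m" using k by simp
  then have mp: "m \<le> p" using p by (rule order_trans)
  have "dft_l1 p (conv_pow \<phi> k) = (\<Sum>j\<le>2 * p. ?a j ^ k) / sqrt ?N"
    unfolding dft_l1_def norm_dft udft_conv_pow[OF \<phi> p] norm_power sum_divide_distrib ..
  also have "\<dots> \<le> ?B ^ (k - 2) * (\<Sum>j\<le>2 * p. (?a j)\<^sup>2) / sqrt ?N"
    using norm_udft_le[OF \<phi> mp] by (intro divide_right_mono sum_power_le_sum_square k) auto
  also have "\<dots> = sqrt ?N * ?B ^ (k - 2) * (l2norm \<phi>)\<^sup>2"
  proof -
    have "?B ^ (k - 2) * (\<Sum>j\<le>2 * p. (?a j)\<^sup>2) / sqrt ?N = ?B ^ (k - 2) * (l2norm \<phi>)\<^sup>2 * (?N / sqrt ?N)"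
      unfolding parseval_udft[OF supp_in_mono[OF \<phi> mp]] by (simp only: times_divide_eq_right mult_ac)
    then show ?thesis by (simp add: real_div_sqrt mult_ac)
  qed
  finally show ?thesis .
qed

lemma dft_l1_conv_pow_le_normalized:
  assumes \<phi>: "\<phi> \<in> supp_in m" and R: "l2norm \<phi> \<le> R / sqrt (real (2 * m + 1))" and k: "2 \<le> k"
  shows "dft_l1 (k * m) (conv_pow \<phi> k) \<le> real k * R ^ k / sqrt (real (2 * k * m + 1))"
proof -
  let ?n = "real (2 * m + 1)" and ?N = "real (2 * k * m + 1)"
  have n: "?n > 0" and N: "?N > 0" by (simp_all only: of_nat_0_less_iff)
  have l2_nonneg: "0 \<le> l2norm \<phi>" by (rule l2norm_nonneg)
  have B: "sqrt ?n * l2norm \<phi> \<le> R"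
    using R n by (simp add: field_simps)
  have "0 \<le> R / sqrt ?n"
    using R l2_nonneg by linarith
  then have "0 \<le> R" by (simp add: zero_le_divide_iff)
  have sq: "(l2norm \<phi>)\<^sup>2 \<le> R\<^sup>2 / ?n"
    using power_mono[OF R l2_nonneg, of 2] n by (simp add: power_divide)
  have "dft_l1 (k * m) (conv_pow \<phi> k) \<le> sqrt ?N * (sqrt ?n * l2norm \<phi>) ^ (k - 2) * (l2norm \<phi>)\<^sup>2"
    using dft_l1_conv_pow_le[OF \<phi> k order_refl] by (simp add: mult.assoc)
  also have "\<dots> \<le> sqrt ?N * R ^ (k - 2) * (R\<^sup>2 / ?n)"
    using B sq l2_nonneg \<open>0 \<le> R\<close> by (intro mult_mono power_mono) auto
  also have "\<dots> = (R ^ (k - 2) * R\<^sup>2) * (sqrt ?N / ?n)"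
    by (simp only: times_divide_eq_right mult_ac)
  also have "\<dots> = R ^ k * (sqrt ?N / ?n)"
    using k by (metis le_add_diff_inverse2 power_add)
  also have "\<dots> \<le> R ^ k * (real k / sqrt ?N)"
  proof (intro mult_left_mono)
    have "2 * k * m + 1 \<le> k * (2 * m + 1)" using k by (simp add: algebra_simps)
    then have "?N \<le> real k * ?n" by (metis of_nat_le_iff of_nat_mult)
    then show "sqrt ?N / ?n \<le> real k / sqrt ?N"
      using n N by (simp add: field_simps)
  qed (use \<open>0 \<le> R\<close> in simp)
  finally show ?thesis by (simp add: mult.commute)
qed

lemma real_le_two_power_pred: "1 \<le> k \<Longrightarrow> real k \<le> 2 ^ (k - 1)"
proof -
  assume "1 \<le> k"
  have "k - 1 < 2 ^ (k - 1)" by (rule less_exp)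
  then have "k \<le> 2 ^ (k - 1)" using \<open>1 \<le> k\<close> by linarith
  then show ?thesis by (metis of_nat_le_iff of_nat_numeral of_nat_power)
qed

(* The exponent 2k+1-1 is the shape c (2k+1) takes for c k = 2^(k-1). *)
lemma two_power_pred_odd_le:
  assumes "1 \<le> k"
  shows "(2::real) ^ (2 * k + 1 - 1) \<le> 3 * sqrt (real (2 * k + 1)) * (2 ^ (k - 1))\<^sup>2"
proof -
  have "2 * k + 1 - 1 = 2 + (k - 1) * 2" using assms by simp
  then have "(2::real) ^ (2 * k + 1 - 1) = 4 * (2 ^ (k - 1))\<^sup>2"
    by (simp only: power_add power_mult) simp
  moreover have "4 \<le> 3 * sqrt (real (2 * k + 1))"
  proof -
    have "4 / 3 \<le> sqrt (3::real)" by (rule real_le_rsqrt) (simp add: power2_eq_square)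
    also have "\<dots> \<le> sqrt (real (2 * k + 1))" using assms by simp
    finally show ?thesis by simp
  qed
  ultimately show ?thesis by simp
qed

lemma ln_two_power_pred_bigo: "(\<lambda>k::nat. ln ((2::real) ^ (k - 1))) \<in> O(\<lambda>k. real k * ln (real k))"
proof (rule bigoI[where c=1])
  show "\<forall>\<^sub>F k in at_top. norm (ln ((2::real) ^ (k - 1))) \<le> 1 * norm (real k * ln (real k))"
    using eventually_ge_at_top[of "3::nat"]
  proof (rule eventually_mono)
    fix k :: nat assume k: "3 \<le> k"
    have "norm (ln ((2::real) ^ (k - 1))) = real (k - 1) * ln 2" by (simp add: ln_realpow)
    also have "\<dots> \<le> real k * ln (real k)"
      using k by (intro mult_mono) auto
    finally show "norm (ln ((2::real) ^ (k - 1))) \<le> 1 * norm (real k * ln (real k))"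
      using k by simp
  qed
qed

theorem proposition9:
  "\<exists>c :: nat \<Rightarrow> real.
     (\<forall>k\<ge>1. c k > 0) \<and> c 1 = 1 \<and>
     (\<forall>p. c (2^p) = 2 ^ (2^p - 1)) \<and>
     (\<forall>k\<ge>1. c (2*k+1) \<le> 3 * sqrt (real (2*k+1)) * (c k)\<^sup>2) \<and>
     (\<lambda>k. ln (c k)) \<in> O(\<lambda>k. real k * ln (real k)) \<and>
     (\<forall>(X :: cseq set) (\<phi> :: cseq) (m :: nat) (R :: real).
        \<phi> \<in> supp_in m \<and> reproduces \<phi> X \<and> l2norm \<phi> \<le> R / sqrt (real (2*m+1)) \<longrightarrow>
        (\<forall>k\<ge>2. conv_pow \<phi> k \<in> supp_in (k*m) \<and> reproduces (conv_pow \<phi> k) X \<and>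
            l2norm (conv_pow \<phi> k) \<le> dft_l1 (k*m) (conv_pow \<phi> k) \<and>
            dft_l1 (k*m) (conv_pow \<phi> k) \<le> c k * R ^ k / sqrt (real (2*k*m+1))))"
proof (intro exI[where x="\<lambda>k. (2::real) ^ (k - 1)"] conjI allI impI)
  show "(\<lambda>k. ln ((2::real) ^ (k - 1))) \<in> O(\<lambda>k. real k * ln (real k))"
    by (rule ln_two_power_pred_bigo)
next
  fix k :: nat assume "1 \<le> k"
  then show "(2::real) ^ (2 * k + 1 - 1) \<le> 3 * sqrt (real (2 * k + 1)) * (2 ^ (k - 1))\<^sup>2"
    by (rule two_power_pred_odd_le)
next
  fix X \<phi> m R and k :: nat
  assume "\<phi> \<in> supp_in m \<and> reproduces \<phi> X \<and> l2norm \<phi> \<le> R / sqrt (real (2 * m + 1))" and k: "2 \<le> k"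
  then have \<phi>: "\<phi> \<in> supp_in m" and rep: "reproduces \<phi> X" and R: "l2norm \<phi> \<le> R / sqrt (real (2 * m + 1))"
    by auto
  show "conv_pow \<phi> k \<in> supp_in (k * m)"
    using \<phi> by (rule conv_pow_supp_in)
  show "reproduces (conv_pow \<phi> k) X"
    using \<phi> rep k by (intro reproduces_conv_pow) auto
  show "l2norm (conv_pow \<phi> k) \<le> dft_l1 (k * m) (conv_pow \<phi> k)"
    using \<phi> by (intro l2norm_le_dft_l1 conv_pow_supp_in)
  have "0 \<le> R / sqrt (real (2 * m + 1))"
    using R l2norm_nonneg[of \<phi>] by linarith
  then have "0 \<le> R" by (simp add: zero_le_divide_iff)
  have "real k * R ^ k / sqrt (real (2 * k * m + 1)) \<le> 2 ^ (k - 1) * R ^ k / sqrt (real (2 * k * m + 1))"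
    using k \<open>0 \<le> R\<close> by (intro divide_right_mono mult_right_mono real_le_two_power_pred) auto
  with dft_l1_conv_pow_le_normalized[OF \<phi> R k]
  show "dft_l1 (k * m) (conv_pow \<phi> k) \<le> 2 ^ (k - 1) * R ^ k / sqrt (real (2 * k * m + 1))"
    by (rule order_trans)
qed simp_all

end
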